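(* For every positive integer $n$ there exists a function $f_n:\mathbb Z\to\omega$ such that for all $l,d<\omega$ there exists $m<\omega$ such that for every $p:n\to\mathbb Z$ with $\max\{|p(k)-p(k')|\mid k<k'<n\}\le d$ there exists $i<m$ with $f_n(p(k)+i)=l$ for every $k<n$.
   Context: Here $n=\{0,\dots,n-1\}$ and $\omega$ is the set of natural numbers; for $n=1$ the maximum over the empty set is taken to be $0$. *)

theory Defs
  imports Main
begin

end

theory Submission
  imports Defs "HOL-Number_Theory.Cong" "HOL-Computational_Algebra.Primes" "HOL-Library.Nat_Bijection"
begin

(* Fix primes q 0 < q 1 < ... with n (2j + 1) < q j, and colour x by the first component of
   the pair coded by the least j with x mod q j \<le> 2j.  Given l and d, let J code (l, d), so
   d \<le> J.  For an n-point configuration p of diameter at most d, the Chinese remainder theorem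
   yields a shift i < q 0 \<dots> q J such that p k + i \<equiv> p k - p 0 + d \<in> [0, 2J] (mod q J) for all k,
   while for every j < J no p k + i has residue in [0, 2j] mod q j: the points p k exclude only
   n (2j + 1) < q j residues for i mod q j.  So the least such j is J for every p k + i,
   which therefore gets colour l. *)

primrec primes_above :: "(nat \<Rightarrow> nat) \<Rightarrow> nat \<Rightarrow> nat" where
  "primes_above b 0 = (SOME q. prime q \<and> b 0 < q)"
| "primes_above b (Suc j) = (SOME q. prime q \<and> max (primes_above b j) (b (Suc j)) < q)"

lemma some_prime_above: "prime (SOME q. prime q \<and> b < q) \<and> b < (SOME q. prime q \<and> (b::nat) < q)"
  using someI_ex[OF bigger_prime[of b]] by blast

lemma primes_above_Suc:
  "prime (primes_above b (Suc j)) \<and> max (primes_above b j) (b (Suc j)) < primes_above b (Suc j)"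
  unfolding primes_above.simps by (rule some_prime_above)

lemma prime_primes_above: "prime (primes_above b j)"
  by (cases j) (simp_all add: some_prime_above primes_above_Suc del: primes_above.simps(2))

lemma bound_less_primes_above: "b j < primes_above b j"
  using primes_above_Suc[of b] some_prime_above[of "b 0"] by (cases j) (auto simp del: primes_above.simps(2))

lemma strict_mono_primes_above: "strict_mono (primes_above b)"
  using primes_above_Suc by (simp del: primes_above.simps add: strict_mono_Suc_iff)

lemma coprime_primes_above: "i \<noteq> j \<Longrightarrow> coprime (primes_above b i) (primes_above b j)"
  by (metis prime_primes_above strict_mono_primes_above primes_coprime strict_mono_eq)

lemma exists_shift_avoiding_residues:
  fixes c :: "nat \<Rightarrow> int"
  assumes "n * (t + 1) < q"
  shows "\<exists>r. \<forall>k<n. int t < (c k + int r) mod int q"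
proof -
  let ?B = "(\<lambda>(s, k). nat ((int s - c k) mod int q)) ` ({..t} \<times> {..<n})"
  have "card ?B \<le> card ({..t} \<times> {..<n})"
    by (rule card_image_le) auto
  also have "\<dots> < card {..<q}"
    using assms by (simp add: card_cartesian_product mult.commute)
  finally have "\<not> {..<q} \<subseteq> ?B"
    using card_mono[of ?B "{..<q}"] by auto
  then obtain r where "r < q" "r \<notin> ?B"
    by auto
  have "int t < (c k + int r) mod int q" if "k < n" for k
  proof (rule ccontr)
    define s where "s = nat ((c k + int r) mod int q)"
    assume "\<not> int t < (c k + int r) mod int q"
    then have "s \<le> t" and s: "int s = (c k + int r) mod int q"
      using \<open>r < q\<close> by (auto simp: s_def)
    then have "r = nat ((int s - c k) mod int q)"
      using \<open>r < q\<close> by (simp add: mod_diff_left_eq)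
    with \<open>r \<notin> ?B\<close> \<open>s \<le> t\<close> \<open>k < n\<close> show False
      by auto
  qed
  then show ?thesis by blast
qed

definition residue_level :: "(nat \<Rightarrow> nat) \<Rightarrow> int \<Rightarrow> nat" where
  "residue_level q x = (LEAST j. x mod int (q j) \<le> int (2 * j))"

lemma residue_level_eqI:
  assumes "x mod int (q J) \<le> int (2 * J)" and "\<And>j. j < J \<Longrightarrow> int (2 * j) < x mod int (q j)"
  shows "residue_level q x = J"
  unfolding residue_level_def
  by (rule Least_equality) (use assms in \<open>auto simp: not_le[symmetric]\<close>)

lemma exists_shift_with_residue_level:
  fixes p :: "nat \<Rightarrow> int"
  assumes coprime: "\<And>i j. i \<noteq> j \<Longrightarrow> coprime (q i) (q j)"
    and large: "\<And>j. n * (2 * j + 1) < q j"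
    and "1 \<le> n" and "d \<le> J"
    and diam: "\<And>k. k < n \<Longrightarrow> \<bar>p k - p 0\<bar> \<le> int d"
  shows "\<exists>i < (\<Prod>j\<le>J. q j). \<forall>k<n. residue_level q (p k + int i) = J"
proof -
  have q_pos: "0 < q j" for j
    using large[of j] by simp
  have "\<exists>r. \<forall>k<n. int (2 * j) < (p k + int r) mod int (q j)" for j
    by (rule exists_shift_avoiding_residues[OF large])
  then obtain R where R: "\<And>j k. k < n \<Longrightarrow> int (2 * j) < (p k + int (R j)) mod int (q j)"
    by metis
  define u where "u j = (if j < J then R j else nat ((int d - p 0) mod int (q J)))" for j
  obtain i where "i < (\<Prod>j\<le>J. q j)" and i: "\<forall>j\<le>J. [i = u j] (mod q j)"
    using chinese_remainder_unique_nat[of "{..J}" q u] q_pos coprime by auto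
  have i_mod: "int i mod int (q j) = int (u j) mod int (q j)" if "j \<le> J" for j
    using i that by (metis cong_def of_nat_mod)
  have "residue_level q (p k + int i) = J" if "k < n" for k
  proof (rule residue_level_eqI)
    have "2 * J < q J"
      using large[of J] mult_le_mono1[OF \<open>1 \<le> n\<close>, of "2 * J + 1"] by simp
    have bounds: "0 \<le> p k - p 0 + int d" "p k - p 0 + int d \<le> int (2 * J)"
      using diam[OF that] \<open>d \<le> J\<close> by auto
    have "(p k + int i) mod int (q J) = (p k + int i mod int (q J)) mod int (q J)"
      by (simp add: mod_add_right_eq)
    also have "int i mod int (q J) = (int d - p 0) mod int (q J)"
      using i_mod[of J] q_pos[of J] by (simp add: u_def)
    also have "(p k + (int d - p 0) mod int (q J)) mod int (q J) = (p k - p 0 + int d) mod int (q J)"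
      by (simp add: mod_add_right_eq algebra_simps)
    also have "\<dots> = p k - p 0 + int d"
      using bounds \<open>2 * J < q J\<close> by (intro mod_pos_pos_trivial) auto
    finally show "(p k + int i) mod int (q J) \<le> int (2 * J)"
      using bounds by simp
  next
    fix j assume "j < J"
    then have "int i mod int (q j) = int (R j) mod int (q j)"
      using i_mod[of j] by (simp add: u_def)
    then have "(p k + int i) mod int (q j) = (p k + int (R j)) mod int (q j)"
      by (rule mod_add_cong[OF refl])
    then show "int (2 * j) < (p k + int i) mod int (q j)"
      using R[OF that] by simp
  qed
  then show ?thesis
    using \<open>i < (\<Prod>j\<le>J. q j)\<close> by blast
qed

definition moduli :: "nat \<Rightarrow> nat \<Rightarrow> nat" where
  "moduli n = primes_above (\<lambda>j. n * (2 * j + 1))"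

definition colouring :: "nat \<Rightarrow> int \<Rightarrow> nat" where
  "colouring n x = fst (prod_decode (residue_level (moduli n) x))"

lemma exists_monochromatic_shift:
  fixes p :: "nat \<Rightarrow> int"
  assumes "1 \<le> n" and "\<And>k. k < n \<Longrightarrow> \<bar>p k - p 0\<bar> \<le> int d"
  shows "\<exists>i < (\<Prod>j\<le>prod_encode (l, d). moduli n j). \<forall>k<n. colouring n (p k + int i) = l"
proof -
  have "\<exists>i < (\<Prod>j\<le>prod_encode (l, d). moduli n j).
      \<forall>k<n. residue_level (moduli n) (p k + int i) = prod_encode (l, d)"
    unfolding moduli_def
    by (rule exists_shift_with_residue_level[where d = d])
      (fact coprime_primes_above bound_less_primes_above assms le_prod_encode_2)+
  then show ?thesis
    by (auto simp: colouring_def)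
qed

theorem corollary3p9:
  shows "\<forall>n::nat. n \<ge> 1 \<longrightarrow>
    (\<exists>f :: int \<Rightarrow> nat. \<forall>(l::nat) (d::nat). \<exists>m::nat.
       \<forall>p :: nat \<Rightarrow> int.
         (\<forall>k k'. k < k' \<and> k' < n \<longrightarrow> \<bar>p k - p k'\<bar> \<le> int d) \<longrightarrow>
         (\<exists>i<m. \<forall>k<n. f (p k + int i) = l))"
proof -
  have "\<exists>i < (\<Prod>j\<le>prod_encode (l, d). moduli n j). \<forall>k<n. colouring n (p k + int i) = l"
    if "1 \<le> n" and diam: "\<forall>k k'. k < k' \<and> k' < n \<longrightarrow> \<bar>p k - p k'\<bar> \<le> int d" for n l d p
  proof (rule exists_monochromatic_shift[OF \<open>1 \<le> n\<close>])
    show "\<bar>p k - p 0\<bar> \<le> int d" if "k < n" for k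
      using diam that by (cases "k = 0") (auto simp: abs_minus_commute)
  qed
  then show ?thesis
    by blast
qed

end
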